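(* Let $S=(\mathcal{E},\Sigma,X,\mathcal{O})$ be an entity and for $A\subseteq X$ define $cl(A)=\bigcap\{X\setminus O(e,p): (e,p)\in\mathcal{E}\times\Sigma,\ O(e,p)\subseteq X\setminus A\}$ (the empty intersection being $X$). Then $cl$ is a closure operator on $X$; every $O(e,p)$ is open for this closure (i.e. $X\setminus O(e,p)$ is closed); for all $e,p$ and $A\subseteq X$, $O(e,p)\subseteq X\setminus cl(A)\iff O(e,p)\subseteq X\setminus A$; and $eig(A)=eig(int(A))$, where $int(A)=X\setminus cl(X\setminus A)$.
   Context: An entity $S=(\mathcal{E},\Sigma,X,\mathcal{O})$ consists of sets $\mathcal{E},\Sigma$ and for each $e\in\mathcal{E},p\in\Sigma$ a nonempty set $O(e,p)$, with $X=\bigcup O(e,p)$. A closure operator on $X$ is a map $cl:\mathcal{P}(X)\to\mathcal{P}(X)$ with $K\subseteq cl(K)$, $K\subseteq L\Rightarrow cl(K)\subseteq cl(L)$, $cl(cl(K))=cl(K)$, $cl(\emptyset)=\emptyset$. The central eigen map is $eig(A)=\{(e,p):O(e,p)\subseteq A\}$. *)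

theory Defs
  imports Main
begin

definition entity :: "'e set \<Rightarrow> 'p set \<Rightarrow> ('e \<Rightarrow> 'p \<Rightarrow> 'x set) \<Rightarrow> bool" where
  "entity E Sig Out \<longleftrightarrow> (\<forall>e\<in>E. \<forall>p\<in>Sig. Out e p \<noteq> {})"

definition outcomes :: "'e set \<Rightarrow> 'p set \<Rightarrow> ('e \<Rightarrow> 'p \<Rightarrow> 'x set) \<Rightarrow> 'x set" where
  "outcomes E Sig Out = (\<Union>e\<in>E. \<Union>p\<in>Sig. Out e p)"

definition closure_operator :: "'x set \<Rightarrow> ('x set \<Rightarrow> 'x set) \<Rightarrow> bool" where
  "closure_operator X cl \<longleftrightarrow>
     (\<forall>K. K \<subseteq> X \<longrightarrow> cl K \<subseteq> X) \<and>
     (\<forall>K. K \<subseteq> X \<longrightarrow> K \<subseteq> cl K) \<and>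
     (\<forall>K L. K \<subseteq> L \<and> L \<subseteq> X \<longrightarrow> cl K \<subseteq> cl L) \<and>
     (\<forall>K. K \<subseteq> X \<longrightarrow> cl (cl K) = cl K) \<and>
     cl {} = {}"

definition ent_cl :: "'e set \<Rightarrow> 'p set \<Rightarrow> ('e \<Rightarrow> 'p \<Rightarrow> 'x set) \<Rightarrow> 'x set \<Rightarrow> 'x set" where
  "ent_cl E Sig Out A =
     outcomes E Sig Out \<inter>
     \<Inter>{outcomes E Sig Out - Out e p | e p. e \<in> E \<and> p \<in> Sig \<and> Out e p \<subseteq> outcomes E Sig Out - A}"

definition ent_int :: "'e set \<Rightarrow> 'p set \<Rightarrow> ('e \<Rightarrow> 'p \<Rightarrow> 'x set) \<Rightarrow> 'x set \<Rightarrow> 'x set" where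
  "ent_int E Sig Out A = outcomes E Sig Out - ent_cl E Sig Out (outcomes E Sig Out - A)"

definition eig :: "'e set \<Rightarrow> 'p set \<Rightarrow> ('e \<Rightarrow> 'p \<Rightarrow> 'x set) \<Rightarrow> 'x set \<Rightarrow> ('e \<times> 'p) set" where
  "eig E Sig Out A = {(e, p). e \<in> E \<and> p \<in> Sig \<and> Out e p \<subseteq> A}"

end

theory Submission
  imports Defs
begin

(* A point lies in cl A iff every outcome set containing it meets A. Consequently an outcome
   set is disjoint from cl A exactly when it is disjoint from A, and all four claims follow
   from this one equivalence. *)

lemma Out_subset_outcomes: "e \<in> E \<Longrightarrow> p \<in> Sig \<Longrightarrow> Out e p \<subseteq> outcomes E Sig Out"
  unfolding outcomes_def by blast

lemma mem_ent_cl_iff: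
  "x \<in> ent_cl E Sig Out A \<longleftrightarrow>
     x \<in> outcomes E Sig Out \<and> (\<forall>e\<in>E. \<forall>p\<in>Sig. x \<in> Out e p \<longrightarrow> Out e p \<inter> A \<noteq> {})"
  unfolding ent_cl_def outcomes_def by blast

lemma ent_cl_subset_outcomes: "ent_cl E Sig Out A \<subseteq> outcomes E Sig Out"
  by (auto simp: mem_ent_cl_iff)

lemma outcomes_Int_subset_ent_cl: "outcomes E Sig Out \<inter> A \<subseteq> ent_cl E Sig Out A"
  by (auto simp: mem_ent_cl_iff)

lemma ent_cl_mono: "A \<subseteq> B \<Longrightarrow> ent_cl E Sig Out A \<subseteq> ent_cl E Sig Out B"
  unfolding subset_iff mem_ent_cl_iff by blast

lemma ent_cl_empty: "ent_cl E Sig Out {} = {}"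
  by (auto simp: mem_ent_cl_iff outcomes_def)

lemma Out_disjoint_ent_cl_iff:
  assumes "e \<in> E" "p \<in> Sig"
  shows "Out e p \<inter> ent_cl E Sig Out A = {} \<longleftrightarrow> Out e p \<inter> A = {}"
proof
  assume "Out e p \<inter> ent_cl E Sig Out A = {}"
  moreover have "Out e p \<inter> A \<subseteq> ent_cl E Sig Out A"
    using outcomes_Int_subset_ent_cl[of E Sig Out A] Out_subset_outcomes[OF assms, of Out] by blast
  ultimately show "Out e p \<inter> A = {}" by blast
next
  assume "Out e p \<inter> A = {}"
  then have "x \<notin> ent_cl E Sig Out A" if "x \<in> Out e p" for x
    using that assms unfolding mem_ent_cl_iff by blast
  then show "Out e p \<inter> ent_cl E Sig Out A = {}" by blast
qed

lemma ent_cl_idem: "ent_cl E Sig Out (ent_cl E Sig Out A) = ent_cl E Sig Out A"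
proof
  show "ent_cl E Sig Out (ent_cl E Sig Out A) \<subseteq> ent_cl E Sig Out A"
  proof
    fix x assume "x \<in> ent_cl E Sig Out (ent_cl E Sig Out A)"
    then have "x \<in> outcomes E Sig Out"
      and "\<forall>e\<in>E. \<forall>p\<in>Sig. x \<in> Out e p \<longrightarrow> Out e p \<inter> ent_cl E Sig Out A \<noteq> {}"
      unfolding mem_ent_cl_iff[of x _ _ _ "ent_cl E Sig Out A"] by blast+
    then show "x \<in> ent_cl E Sig Out A"
      unfolding mem_ent_cl_iff[of x] using Out_disjoint_ent_cl_iff[of _ E _ Sig Out A] by blast
  qed
  show "ent_cl E Sig Out A \<subseteq> ent_cl E Sig Out (ent_cl E Sig Out A)"
    using outcomes_Int_subset_ent_cl[of E Sig Out "ent_cl E Sig Out A"]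
      ent_cl_subset_outcomes[of E Sig Out A] by blast
qed

lemma closure_operator_ent_cl: "closure_operator (outcomes E Sig Out) (ent_cl E Sig Out)"
  unfolding closure_operator_def
  using ent_cl_subset_outcomes outcomes_Int_subset_ent_cl ent_cl_mono ent_cl_idem ent_cl_empty
  by (metis inf.absorb_iff2)

lemma Out_subset_Diff_ent_cl_iff:
  assumes "e \<in> E" "p \<in> Sig"
  shows "Out e p \<subseteq> outcomes E Sig Out - ent_cl E Sig Out A
     \<longleftrightarrow> Out e p \<subseteq> outcomes E Sig Out - A"
  using Out_disjoint_ent_cl_iff[OF assms, of Out A] Out_subset_outcomes[OF assms, of Out] by blast

lemma ent_cl_complement_Out:
  assumes "e \<in> E" "p \<in> Sig"
  shows "ent_cl E Sig Out (outcomes E Sig Out - Out e p) = outcomes E Sig Out - Out e p"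
proof
  have "Out e p \<inter> ent_cl E Sig Out (outcomes E Sig Out - Out e p) = {}"
    using Out_disjoint_ent_cl_iff[OF assms, of Out "outcomes E Sig Out - Out e p"] by blast
  then show "ent_cl E Sig Out (outcomes E Sig Out - Out e p) \<subseteq> outcomes E Sig Out - Out e p"
    using ent_cl_subset_outcomes[of E Sig Out] by blast
  show "outcomes E Sig Out - Out e p \<subseteq> ent_cl E Sig Out (outcomes E Sig Out - Out e p)"
    using outcomes_Int_subset_ent_cl[of E Sig Out "outcomes E Sig Out - Out e p"] by blast
qed

lemma eig_ent_int: "eig E Sig Out (ent_int E Sig Out A) = eig E Sig Out A"
proof -
  have "Out e p \<subseteq> ent_int E Sig Out A \<longleftrightarrow> Out e p \<subseteq> A" if "e \<in> E" "p \<in> Sig" for e p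
    using Out_subset_Diff_ent_cl_iff[OF that, of Out "outcomes E Sig Out - A"]
      Out_subset_outcomes[OF that, of Out]
    unfolding ent_int_def by blast
  then show ?thesis
    unfolding eig_def by blast
qed

theorem mainTheorem18:
  fixes E :: "'e set" and Sig :: "'p set" and Out :: "'e \<Rightarrow> 'p \<Rightarrow> 'x set"
  assumes "entity E Sig Out"
  defines "X \<equiv> outcomes E Sig Out"
  shows "closure_operator X (ent_cl E Sig Out)
    \<and> (\<forall>e\<in>E. \<forall>p\<in>Sig. ent_cl E Sig Out (X - Out e p) = X - Out e p)
    \<and> (\<forall>e\<in>E. \<forall>p\<in>Sig. \<forall>A. A \<subseteq> X \<longrightarrow>
          (Out e p \<subseteq> X - ent_cl E Sig Out A \<longleftrightarrow> Out e p \<subseteq> X - A))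
    \<and> (\<forall>A. A \<subseteq> X \<longrightarrow> eig E Sig Out A = eig E Sig Out (ent_int E Sig Out A))"
  unfolding X_def
  by (simp add: closure_operator_ent_cl ent_cl_complement_Out Out_subset_Diff_ent_cl_iff
      eig_ent_int)

end
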